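(* Let $X$ be an affine Poisson variety over $\mathbf{k}$ with $\operatorname{HP}_0(\mathcal{O}(X))$ finite-dimensional, let $A_\hbar$ be a deformation quantization of $X$, and let $V\subseteq\mathcal{O}(X)$ be a finite-dimensional subspace such that the composition $V\hookrightarrow\mathcal{O}(X)\twoheadrightarrow\operatorname{HP}_0(\mathcal{O}(X))$ is an isomorphism. Then, inside $A_\hbar[\hbar^{-1}]$, $$A_\hbar\subseteq V[[\hbar]]+\hbar^{-1}\overline{[A_\hbar,A_\hbar]},$$ where $V[[\hbar]]=\{\sum_{m\ge0}v_m\hbar^m: v_m\in V\}\subseteq A_\hbar$ and $\overline{[A_\hbar,A_\hbar]}=\{\sum_{m\ge0}\hbar^mc_m: c_m\in[A_\hbar,A_\hbar]\}$ is the $\hbar$-adic closure of the span of commutators.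
   Context: A deformation quantization of $X$ is an associative $\mathbf{k}[[\hbar]]$-algebra $A_\hbar=(\mathcal{O}(X)[[\hbar]],\star)$ with $\star$ $\mathbf{k}[[\hbar]]$-bilinear, $a\star b\equiv ab\pmod\hbar$, and $a\star b-b\star a\equiv\hbar\{a,b\}\pmod{\hbar^2}$. $\operatorname{HP}_0(\mathcal{O}(X))=\mathcal{O}(X)/\{\mathcal{O}(X),\mathcal{O}(X)\}$. $\mathbf{k}$ is algebraically closed of characteristic zero. *)

theory Defs
  imports Main "HOL-Computational_Algebra.Formal_Power_Series"
    "HOL-Computational_Algebra.Polynomial" "HOL-Library.Function_Algebras"
begin

text \<open>The base field k: algebraically closed (characteristic zero is imposed by the
  type class field_char_0 in the theorem).\<close>
definition alg_closed_field :: "'k::field itself \<Rightarrow> bool" where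
  "alg_closed_field _ \<longleftrightarrow> (\<forall>p :: 'k poly. degree p > 0 \<longrightarrow> (\<exists>x. poly p x = 0))"

text \<open>O(X) is a commutative ring 'a with a k-algebra structure given by scale.\<close>
definition k_algebra :: "('k::field \<Rightarrow> 'a::comm_ring_1 \<Rightarrow> 'a) \<Rightarrow> bool" where
  "k_algebra scale \<longleftrightarrow> vector_space scale \<and>
     (\<forall>c a b. scale c (a * b) = scale c a * b)"

inductive_set alg_gen :: "('k::field \<Rightarrow> 'a::comm_ring_1 \<Rightarrow> 'a) \<Rightarrow> 'a set \<Rightarrow> 'a set"
  for scale G where
  gen: "x \<in> G \<Longrightarrow> x \<in> alg_gen scale G"
| one: "1 \<in> alg_gen scale G"
| add: "x \<in> alg_gen scale G \<Longrightarrow> y \<in> alg_gen scale G \<Longrightarrow> x + y \<in> alg_gen scale G"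
| mult: "x \<in> alg_gen scale G \<Longrightarrow> y \<in> alg_gen scale G \<Longrightarrow> x * y \<in> alg_gen scale G"
| smult: "x \<in> alg_gen scale G \<Longrightarrow> scale c x \<in> alg_gen scale G"

definition affine_variety_algebra :: "('k::field \<Rightarrow> 'a::comm_ring_1 \<Rightarrow> 'a) \<Rightarrow> bool" where
  "affine_variety_algebra scale \<longleftrightarrow> k_algebra scale \<and>
     (\<exists>G. finite G \<and> alg_gen scale G = UNIV) \<and>
     (\<forall>(a::'a) (n::nat). a ^ n = 0 \<longrightarrow> a = 0)"

definition poisson_bracket :: "('k::field \<Rightarrow> 'a::comm_ring_1 \<Rightarrow> 'a) \<Rightarrow> ('a \<Rightarrow> 'a \<Rightarrow> 'a) \<Rightarrow> bool" where
  "poisson_bracket scale br \<longleftrightarrow>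
     (\<forall>a b c. br (a + b) c = br a c + br b c) \<and>
     (\<forall>r a b. br (scale r a) b = scale r (br a b)) \<and>
     (\<forall>a b. br a b = - br b a) \<and>
     (\<forall>a b c. br a (br b c) + br b (br c a) + br c (br a b) = 0) \<and>
     (\<forall>a b c. br a (b * c) = br a b * c + b * br a c)"

definition poisson_brackets :: "('k::field \<Rightarrow> 'a::comm_ring_1 \<Rightarrow> 'a) \<Rightarrow> ('a \<Rightarrow> 'a \<Rightarrow> 'a) \<Rightarrow> 'a set" where
  "poisson_brackets scale br = module.span scale {br a b | a b. True}"

text \<open>HP_0 = O / {O,O} is finite-dimensional: finitely many elements span the quotient.\<close>
definition HP0_finite_dim :: "('k::field \<Rightarrow> 'a::comm_ring_1 \<Rightarrow> 'a) \<Rightarrow> ('a \<Rightarrow> 'a \<Rightarrow> 'a) \<Rightarrow> bool" where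
  "HP0_finite_dim scale br \<longleftrightarrow>
     (\<exists>B. finite B \<and> (\<forall>x. \<exists>v \<in> module.span scale B. x - v \<in> poisson_brackets scale br))"

text \<open>V is a finite-dimensional subspace with V -> O -> HP_0 an isomorphism
  (injective: V meets {O,O} only in 0; surjective: V + {O,O} = O).\<close>
definition HP0_section :: "('k::field \<Rightarrow> 'a::comm_ring_1 \<Rightarrow> 'a) \<Rightarrow> ('a \<Rightarrow> 'a \<Rightarrow> 'a) \<Rightarrow> 'a set \<Rightarrow> bool" where
  "HP0_section scale br V \<longleftrightarrow>
     module.subspace scale V \<and> (\<exists>B. finite B \<and> V = module.span scale B) \<and>
     V \<inter> poisson_brackets scale br = {0} \<and>
     (\<forall>x. \<exists>v \<in> V. x - v \<in> poisson_brackets scale br)"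

text \<open>Elements of O(X)[[h]] are coefficient sequences nat => 'a.
  Action of k[[h]] (as 'k fps) on O(X)[[h]].\<close>
definition fps_act :: "('k::field \<Rightarrow> 'a::comm_ring_1 \<Rightarrow> 'a) \<Rightarrow> 'k fps \<Rightarrow> (nat \<Rightarrow> 'a) \<Rightarrow> (nat \<Rightarrow> 'a)" where
  "fps_act scale c f = (\<lambda>n. \<Sum>i\<le>n. scale (fps_nth c i) (f (n - i)))"

text \<open>Deformation quantization: k[[h]]-bilinear associative product star on O(X)[[h]] with
  a*b = ab mod h and a*b - b*a = h{a,b} mod h^2.\<close>
definition deformation_quantization ::
  "('k::field \<Rightarrow> 'a::comm_ring_1 \<Rightarrow> 'a) \<Rightarrow> ('a \<Rightarrow> 'a \<Rightarrow> 'a) \<Rightarrow>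
   ((nat \<Rightarrow> 'a) \<Rightarrow> (nat \<Rightarrow> 'a) \<Rightarrow> (nat \<Rightarrow> 'a)) \<Rightarrow> bool" where
  "deformation_quantization scale br star \<longleftrightarrow>
     (\<forall>f g h. star (f + g) h = star f h + star g h) \<and>
     (\<forall>f g h. star f (g + h) = star f g + star f h) \<and>
     (\<forall>c f g. star (fps_act scale c f) g = fps_act scale c (star f g)) \<and>
     (\<forall>c f g. star f (fps_act scale c g) = fps_act scale c (star f g)) \<and>
     (\<forall>f g h. star (star f g) h = star f (star g h)) \<and>
     (\<forall>f g. star f g 0 = f 0 * g 0) \<and>
     (\<forall>f g. (star f g - star g f) 0 = 0 \<and> (star f g - star g f) 1 = br (f 0) (g 0))"

definition hbar_mult :: "(nat \<Rightarrow> 'a::zero) \<Rightarrow> (nat \<Rightarrow> 'a)" where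
  "hbar_mult f = (\<lambda>n. if n = 0 then 0 else f (n - 1))"

text \<open>The h-adically convergent sum  \<Sum>_m h^m c_m.\<close>
definition hsum :: "(nat \<Rightarrow> nat \<Rightarrow> 'a::comm_monoid_add) \<Rightarrow> (nat \<Rightarrow> 'a)" where
  "hsum c = (\<lambda>n. \<Sum>m\<le>n. c m (n - m))"

definition commutator_closure ::
  "('k::field \<Rightarrow> 'a::comm_ring_1 \<Rightarrow> 'a) \<Rightarrow> ((nat \<Rightarrow> 'a) \<Rightarrow> (nat \<Rightarrow> 'a) \<Rightarrow> (nat \<Rightarrow> 'a)) \<Rightarrow> (nat \<Rightarrow> 'a) set" where
  "commutator_closure scale star =
     {hsum c | c. \<forall>m. c m \<in> module.span (\<lambda>r f n. scale r (f n)) {star f g - star g f | f g. True}}"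

end

theory Submission
  imports Defs
begin

text \<open>Modulo \<open>\<hbar>\<close> every element of \<open>\<O>(X)\<close> is an element of \<open>V\<close> plus a Poisson bracket, and
  since \<open>[a,b] \<equiv> \<hbar>{a,b} mod \<hbar>\<^sup>2\<close> that bracket is \<open>\<hbar>\<^sup>-\<^sup>1\<close> times a combination of commutators up to
  an error divisible by \<open>\<hbar>\<close>. Dividing the error by \<open>\<hbar>\<close> and repeating, the corrections
  \<open>v\<^sub>m \<hbar>\<^sup>m\<close> and \<open>\<hbar>\<^sup>m c\<^sub>m\<close> converge \<open>\<hbar>\<close>-adically. Only linearity, the first-order
  commutator condition of \<open>\<star>\<close> and the surjectivity of \<open>V \<rightarrow> HP\<^sub>0\<close> are needed.\<close>

lemma module_pointwise:
  assumes "module scale"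
  shows "module (\<lambda>r f n. scale r (f n))"
proof -
  interpret module scale by fact
  show ?thesis
    by unfold_locales (auto simp: fun_eq_iff scale_right_distrib scale_left_distrib)
qed

lemma poisson_bracket_lifts_to_commutators:
  fixes scale :: "'k::field \<Rightarrow> 'a::comm_ring_1 \<Rightarrow> 'a"
  assumes "module scale"
    and comm: "\<And>f g. (star f g - star g f) 0 = 0 \<and> (star f g - star g f) 1 = br (f 0) (g 0)"
    and "x \<in> poisson_brackets scale br"
  shows "\<exists>C \<in> module.span (\<lambda>r f n. scale r (f n)) {star f g - star g f | f g. True}.
           C 0 = 0 \<and> C 1 = x"
proof -
  interpret module scale by fact
  interpret s: module "\<lambda>r f n. scale r (f n)" by (rule module_pointwise) fact
  let ?S = "s.span {star f g - star g f | f g. True}"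
  from \<open>x \<in> poisson_brackets scale br\<close> have "x \<in> span {br a b | a b. True}"
    by (simp add: poisson_brackets_def)
  then show ?thesis
  proof (induction rule: span_induct_alt)
    case base
    show ?case by (rule bexI[of _ 0]) (auto intro: s.span_zero)
  next
    case (step c x y)
    from step(1) obtain a b where "x = br a b" by blast
    from step(2) obtain Cy where Cy: "Cy \<in> ?S" "Cy 0 = 0" "Cy 1 = y" by blast
    define K where "K = star (\<lambda>n. if n = 0 then a else 0) (\<lambda>n. if n = 0 then b else 0)
                      - star (\<lambda>n. if n = 0 then b else 0) (\<lambda>n. if n = 0 then a else 0)"
    have K: "K 0 = 0" "K 1 = x" using comm \<open>x = br a b\<close> by (auto simp: K_def)
    have "K \<in> ?S" by (rule s.span_base) (auto simp: K_def)
    then have "(\<lambda>n. scale c (K n)) + Cy \<in> ?S"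
      using Cy(1) by (intro s.span_add s.span_scale)
    moreover have "((\<lambda>n. scale c (K n)) + Cy) 0 = 0" "((\<lambda>n. scale c (K n)) + Cy) 1 = scale c x + y"
      using K Cy by auto
    ultimately show ?case by blast
  qed
qed

lemma sum_shifted_telescope:
  fixes r C :: "nat \<Rightarrow> nat \<Rightarrow> 'a::ab_group_add"
  assumes step: "\<And>k j. r (Suc k) j = r k (Suc j) - C k (Suc (Suc j))"
  shows "r 0 (k + j) = (\<Sum>m<k. C m (Suc (k + j - m))) + r k j"
proof (induction k arbitrary: j)
  case 0
  then show ?case by simp
next
  case (Suc k)
  have "r 0 (Suc k + j) = (\<Sum>m<k. C m (Suc (k + Suc j - m))) + r k (Suc j)"
    using Suc.IH[of "Suc j"] by simp
  also have "(\<Sum>m<k. C m (Suc (k + Suc j - m))) = (\<Sum>m<k. C m (Suc (Suc k + j - m)))"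
    by (rule sum.cong) (auto simp: Suc_diff_le)
  also have "r k (Suc j) = C k (Suc (Suc j)) + r (Suc k) j"
    by (simp add: step)
  finally show ?case by (simp add: Suc_diff_le algebra_simps)
qed

lemma hbar_adic_division:
  fixes a :: "nat \<Rightarrow> 'a::ab_group_add"
  assumes "\<And>x. \<exists>v \<in> V. \<exists>C \<in> S. C 0 = 0 \<and> C 1 = x - v"
  shows "\<exists>v c. (\<forall>m. v m \<in> V) \<and> (\<forall>m. c m \<in> S) \<and> hbar_mult (a - v) = hsum c"
proof -
  from assms have "\<forall>x. \<exists>vC. fst vC \<in> V \<and> snd vC \<in> S \<and> snd vC 0 = 0 \<and> snd vC 1 = x - fst vC"
    by fastforce
  from choice[OF this] obtain pick where "\<forall>x. fst (pick x) \<in> V \<and> snd (pick x) \<in> S \<and>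
      snd (pick x) 0 = 0 \<and> snd (pick x) 1 = x - fst (pick x)"
    by blast
  then obtain sel lift where sel: "\<And>x. sel x \<in> V"
    and lift: "\<And>x. lift x \<in> S" "\<And>x. lift x 0 = 0" "\<And>x. lift x 1 = x - sel x"
    by (intro that[of "fst \<circ> pick" "snd \<circ> pick"]) auto
  txt \<open>\<open>r k\<close> is the remainder after \<open>k\<close> steps, divided by \<open>\<hbar>\<^sup>k\<close>.\<close>
  define r where "r = rec_nat a (\<lambda>k rk j. rk (Suc j) - lift (rk 0) (Suc (Suc j)))"
  define v where "v m = sel (r m 0)" for m
  define c where "c m = lift (r m 0)" for m
  have c: "c m \<in> S" "c m 0 = 0" "c m 1 = r m 0 - v m" for m
    using lift by (simp_all add: c_def v_def)
  have telescope: "a (k + j) = (\<Sum>m<k. c m (Suc (k + j - m))) + r k j" for k j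
    using sum_shifted_telescope[of r c] by (simp add: r_def c_def)
  have "hbar_mult (a - v) n = hsum c n" for n
  proof (cases n)
    case 0
    then show ?thesis by (simp add: hbar_mult_def hsum_def c)
  next
    case (Suc N)
    have "hsum c n = (\<Sum>m<N. c m (Suc N - m)) + c N 1"
      by (simp add: hsum_def Suc c lessThan_Suc_atMost[symmetric])
    also have "(\<Sum>m<N. c m (Suc N - m)) = (\<Sum>m<N. c m (Suc (N + 0 - m)))"
      by (rule sum.cong) (auto simp: Suc_diff_le)
    finally show ?thesis
      using telescope[of N 0] c by (simp add: hbar_mult_def Suc)
  qed
  then have "hbar_mult (a - v) = hsum c" ..
  moreover have "v m \<in> V" for m
    by (simp add: v_def sel)
  ultimately show ?thesis
    using c(1) by blast
qed

theorem mainTheorem4: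
  fixes scale :: "'k::field_char_0 \<Rightarrow> 'a::comm_ring_1 \<Rightarrow> 'a"
    and br :: "'a \<Rightarrow> 'a \<Rightarrow> 'a"
    and star :: "(nat \<Rightarrow> 'a) \<Rightarrow> (nat \<Rightarrow> 'a) \<Rightarrow> (nat \<Rightarrow> 'a)"
    and V :: "'a set"
  assumes "alg_closed_field TYPE('k)"
    and "affine_variety_algebra scale"
    and "poisson_bracket scale br"
    and "HP0_finite_dim scale br"
    and "deformation_quantization scale br star"
    and "HP0_section scale br V"
  shows "\<forall>a :: nat \<Rightarrow> 'a. \<exists>v. (\<forall>m. v m \<in> V) \<and>
           hbar_mult (a - v) \<in> commutator_closure scale star"
proof
  fix a :: "nat \<Rightarrow> 'a"
  let ?S = "module.span (\<lambda>r f n. scale r (f n)) {star f g - star g f | f g. True}"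
  have "module scale"
    using assms(2) by (simp add: affine_variety_algebra_def k_algebra_def module_iff_vector_space)
  moreover have "\<And>f g. (star f g - star g f) 0 = 0 \<and> (star f g - star g f) 1 = br (f 0) (g 0)"
    using assms(5) by (simp add: deformation_quantization_def)
  ultimately have lift: "x \<in> poisson_brackets scale br \<Longrightarrow> \<exists>C \<in> ?S. C 0 = 0 \<and> C 1 = x" for x
    by (rule poisson_bracket_lifts_to_commutators)
  have "\<exists>v \<in> V. \<exists>C \<in> ?S. C 0 = 0 \<and> C 1 = x - v" for x
  proof -
    from assms(6) obtain v where "v \<in> V" "x - v \<in> poisson_brackets scale br"
      by (auto simp: HP0_section_def)
    with lift show ?thesis by blast
  qed
  from hbar_adic_division[OF this, of a]
  show "\<exists>v. (\<forall>m. v m \<in> V) \<and> hbar_mult (a - v) \<in> commutator_closure scale star"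
    unfolding commutator_closure_def by blast
qed

end
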